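(* Let $R$ be a complete discrete valuation ring with fraction field $K$, maximal ideal $\mathfrak m$ and residue field $k=R/\mathfrak m$ of characteristic different from $2$. Let $E$ be an elliptic curve over $K$ given by $y^2=x^3+ax^2+bx$ with $a,b\in K$, let $E'$ be the elliptic curve $y^2=x^3-2ax^2+(a^2-4b)x$, and let $\delta_{E'}\colon E'(K)\to K^\times/(K^\times)^2$ be the homomorphism defined below. Regard $R^\times/(R^\times)^2$ as a subgroup of $K^\times/(K^\times)^2$. Suppose that, with respect to $R$ (via Tate's algorithm), $E$ and $E'$ have Kodaira symbols $\mathrm{I}_{2n}$ and $\mathrm{I}_n$, respectively, for some integer $n\geq 0$. Then: (i) if $E$ has split multiplicative reduction or $n$ is odd, then $\operatorname{Im}(\delta_{E'})=1$; (ii) if $E$ and $E'$ have good reduction (i.e. $n=0$), then $\operatorname{Im}(\delta_{E'})\subseteq R^\times/(R^\times)^2$.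
   Context: Let $\phi\colon E\to E'$ be the degree $2$ isogeny with kernel generated by $(0,0)$. The homomorphism $\delta_{E'}$ is the connecting homomorphism $E'(K)\to H^1(\operatorname{Gal}(\overline K/K),\ker\phi)\cong K^\times/(K^\times)^2$ (using $\ker\phi\cong\{\pm1\}$ as Galois modules); its kernel is $\phi(E(K))$, and explicitly $\delta_{E'}(O)=1$, $\delta_{E'}((0,0))=(a^2-4b)\cdot(K^\times)^2$, and $\delta_{E'}((x,y))=x\cdot(K^\times)^2$ for $(x,y)\in E'(K)\setminus\{O,(0,0)\}$. *)

theory Defs
  imports Main
begin

definition discrete_valuation :: "('k::field \<Rightarrow> int) \<Rightarrow> bool" where
  "discrete_valuation v \<longleftrightarrow>
     (\<forall>x y. x \<noteq> 0 \<longrightarrow> y \<noteq> 0 \<longrightarrow> v (x * y) = v x + v y) \<and>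
     (\<forall>x y. x \<noteq> 0 \<longrightarrow> y \<noteq> 0 \<longrightarrow> x + y \<noteq> 0 \<longrightarrow> v (x + y) \<ge> min (v x) (v y)) \<and>
     (\<exists>p. p \<noteq> 0 \<and> v p = 1)"

text \<open>Completeness of K with respect to the valuation (equivalently: R complete).
  "x close to 0 at level N" means x = 0 or v x >= N.\<close>
definition val_complete :: "('k::field \<Rightarrow> int) \<Rightarrow> bool" where
  "val_complete v \<longleftrightarrow>
     (\<forall>X :: nat \<Rightarrow> 'k.
        (\<forall>N::int. \<exists>M. \<forall>m\<ge>M. \<forall>n\<ge>M. X m - X n = 0 \<or> v (X m - X n) \<ge> N) \<longrightarrow>
        (\<exists>L. \<forall>N::int. \<exists>M. \<forall>n\<ge>M. X n - L = 0 \<or> v (X n - L) \<ge> N))"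

definition val_ring :: "('k::field \<Rightarrow> int) \<Rightarrow> 'k set" where
  "val_ring v = {x. x = 0 \<or> v x \<ge> 0}"

definition max_ideal :: "('k::field \<Rightarrow> int) \<Rightarrow> 'k set" where
  "max_ideal v = {x. x = 0 \<or> v x > 0}"

definition val_units :: "('k::field \<Rightarrow> int) \<Rightarrow> 'k set" where
  "val_units v = {x. x \<noteq> 0 \<and> v x = 0}"

definition residue_char_not_2 :: "('k::field \<Rightarrow> int) \<Rightarrow> bool" where
  "residue_char_not_2 v \<longleftrightarrow> (2::'k) \<in> val_units v"

section \<open>Weierstrass equations y^2 + a1 xy + a3 y = x^3 + a2 x^2 + a4 x + a6\<close>

type_synonym 'k weq = "'k \<times> 'k \<times> 'k \<times> 'k \<times> 'k"

fun wa1 :: "'k weq \<Rightarrow> 'k" where "wa1 (a1,a2,a3,a4,a6) = a1"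
fun wa2 :: "'k weq \<Rightarrow> 'k" where "wa2 (a1,a2,a3,a4,a6) = a2"
fun wa3 :: "'k weq \<Rightarrow> 'k" where "wa3 (a1,a2,a3,a4,a6) = a3"
fun wa4 :: "'k weq \<Rightarrow> 'k" where "wa4 (a1,a2,a3,a4,a6) = a4"
fun wa6 :: "'k weq \<Rightarrow> 'k" where "wa6 (a1,a2,a3,a4,a6) = a6"

definition wb2 :: "'k::comm_ring_1 weq \<Rightarrow> 'k" where
  "wb2 W = wa1 W ^ 2 + 4 * wa2 W"
definition wb4 :: "'k::comm_ring_1 weq \<Rightarrow> 'k" where
  "wb4 W = 2 * wa4 W + wa1 W * wa3 W"
definition wb6 :: "'k::comm_ring_1 weq \<Rightarrow> 'k" where
  "wb6 W = wa3 W ^ 2 + 4 * wa6 W"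
definition wb8 :: "'k::comm_ring_1 weq \<Rightarrow> 'k" where
  "wb8 W = wa1 W ^ 2 * wa6 W + 4 * wa2 W * wa6 W - wa1 W * wa3 W * wa4 W
           + wa2 W * wa3 W ^ 2 - wa4 W ^ 2"
definition wdisc :: "'k::comm_ring_1 weq \<Rightarrow> 'k" where
  "wdisc W = - (wb2 W ^ 2 * wb8 W) - 8 * wb4 W ^ 3 - 27 * wb6 W ^ 2
             + 9 * wb2 W * wb4 W * wb6 W"

text \<open>W' is obtained from W by the change of variables x = u^2 x' + r,
  y = u^3 y' + u^2 s x' + t (Silverman III.1).\<close>
definition weq_iso :: "'k::field weq \<Rightarrow> 'k weq \<Rightarrow> bool" where
  "weq_iso W W' \<longleftrightarrow> (\<exists>u r s t. u \<noteq> 0 \<and>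
     u * wa1 W' = wa1 W + 2 * s \<and>
     u ^ 2 * wa2 W' = wa2 W - s * wa1 W + 3 * r - s ^ 2 \<and>
     u ^ 3 * wa3 W' = wa3 W + r * wa1 W + 2 * t \<and>
     u ^ 4 * wa4 W' = wa4 W - s * wa3 W + 2 * r * wa2 W - (t + r * s) * wa1 W
                      + 3 * r ^ 2 - 2 * s * t \<and>
     u ^ 6 * wa6 W' = wa6 W + r * wa4 W + r ^ 2 * wa2 W + r ^ 3 - t * wa3 W
                      - t ^ 2 - r * t * wa1 W)"

definition weq_integral :: "('k::field \<Rightarrow> int) \<Rightarrow> 'k weq \<Rightarrow> bool" where
  "weq_integral v W \<longleftrightarrow> wa1 W \<in> val_ring v \<and> wa2 W \<in> val_ring v \<and>
     wa3 W \<in> val_ring v \<and> wa4 W \<in> val_ring v \<and> wa6 W \<in> val_ring v"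

text \<open>Tate's algorithm terminates with type I_0 at step 1 (pi does not divide Delta of an
  integral model) and with type I_m (m >= 1) at step 2 (an integral model with
  pi | a3, a4, a6 and pi not dividing b2; then m = v(Delta)).\<close>
definition kodaira_I :: "('k::field \<Rightarrow> int) \<Rightarrow> 'k weq \<Rightarrow> nat \<Rightarrow> bool" where
  "kodaira_I v W m \<longleftrightarrow> (\<exists>W0. weq_iso W W0 \<and> weq_integral v W0 \<and>
     ((m = 0 \<and> wdisc W0 \<in> val_units v) \<or>
      (m > 0 \<and> wa3 W0 \<in> max_ideal v \<and> wa4 W0 \<in> max_ideal v \<and> wa6 W0 \<in> max_ideal v \<and>
       wb2 W0 \<in> val_units v \<and> wdisc W0 \<noteq> 0 \<and> v (wdisc W0) = int m)))"

text \<open>Split multiplicative reduction: Tate's step 2 situation where T^2 + a1 T - a2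
  splits over the residue field.\<close>
definition split_mult :: "('k::field \<Rightarrow> int) \<Rightarrow> 'k weq \<Rightarrow> bool" where
  "split_mult v W \<longleftrightarrow> (\<exists>W0. weq_iso W W0 \<and> weq_integral v W0 \<and>
     wa3 W0 \<in> max_ideal v \<and> wa4 W0 \<in> max_ideal v \<and> wa6 W0 \<in> max_ideal v \<and>
     wb2 W0 \<in> val_units v \<and>
     (\<exists>T \<in> val_ring v. T ^ 2 + wa1 W0 * T - wa2 W0 \<in> max_ideal v))"

definition curveE :: "'k::field \<Rightarrow> 'k \<Rightarrow> 'k weq" where
  "curveE a b = (0, a, 0, b, 0)"

definition curveE' :: "'k::field \<Rightarrow> 'k \<Rightarrow> 'k weq" where
  "curveE' a b = (0, -2 * a, 0, a ^ 2 - 4 * b, 0)"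

text \<open>K-rational points of E': None is the point at infinity O.\<close>
definition pointsE' :: "'k::field \<Rightarrow> 'k \<Rightarrow> ('k \<times> 'k) option set" where
  "pointsE' a b = insert None
     {Some (x, y) | x y. y ^ 2 = x ^ 3 - 2 * a * x ^ 2 + (a ^ 2 - 4 * b) * x}"

definition deltaE'_rep :: "'k::field \<Rightarrow> 'k \<Rightarrow> ('k \<times> 'k) option \<Rightarrow> 'k" where
  "deltaE'_rep a b P = (case P of None \<Rightarrow> 1
     | Some (x, y) \<Rightarrow> if x = 0 \<and> y = 0 then a ^ 2 - 4 * b else x)"

text \<open>Square class c (K^x)^2 as a subset of K.\<close>
definition sq_class :: "'k::field \<Rightarrow> 'k set" where
  "sq_class c = {c * s ^ 2 | s. s \<noteq> 0}"

definition delta_image :: "'k::field \<Rightarrow> 'k \<Rightarrow> 'k set set" where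
  "delta_image a b = (\<lambda>P. sq_class (deltaE'_rep a b P)) ` pointsE' a b"

end

theory Submission
  imports Defs
begin

(* Write D = a^2 - 4b.  The discriminants of E and E' are 16 b^2 D and 256 b D^2, their
   c4-invariants 16 (D + b) and 16 (D + 16 b).  A model produced by Tate's algorithm rescales
   these by u^12 and u^4 and has discriminant of valuation m and integral c4, a unit when m > 0;
   comparing valuations for E and E' forces v(D) = 4e and v(b) = n + 4e.
   The image of delta consists of the classes of 1, of D and of the x-coordinates of points of
   E', which satisfy y^2 = x (x^2 - 2ax + D).  If n = 0, comparing valuations of both sides shows
   that v(x) is even, so every class contains a unit.  If n > 0, then v(a) = 2e and D is close
   to a^2.  When v(x) differs from v(a), the cofactor x^2 - 2ax + D is close to a nonzero square,
   hence a square by Hensel's lemma, and so is x.  When v(x) = v(a), the cofactor is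
   (x - a)^2 - 4b, again close to a square unless x is very close to a.  That last case
   contradicts parity for odd n; for split reduction, x is then a square because a is:
   -c6 = 32 a (2a^2 - 9b) is a square, since on a split multiplicative model -c6 is congruent to
   the square of (2T + a1)^3, T being a root of T^2 + a1 T - a2 modulo the maximal ideal. *)

section \<open>Invariants of Weierstrass equations\<close>

definition wc4 :: "'k::comm_ring_1 weq \<Rightarrow> 'k" where
  "wc4 W = wb2 W ^ 2 - 24 * wb4 W"

definition wc6 :: "'k::comm_ring_1 weq \<Rightarrow> 'k" where
  "wc6 W = - (wb2 W ^ 3) + 36 * wb2 W * wb4 W - 216 * wb6 W"

definition weq_scale :: "'k::comm_ring_1 \<Rightarrow> 'k weq \<Rightarrow> 'k weq" where
  "weq_scale u W = (u * wa1 W, u ^ 2 * wa2 W, u ^ 3 * wa3 W, u ^ 4 * wa4 W, u ^ 6 * wa6 W)"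

lemma wc4_weq_scale: "wc4 (weq_scale u W) = u ^ 4 * wc4 (W :: 'k::field weq)"
  by (induct W rule: prod_induct5) (simp add: weq_scale_def wc4_def wb2_def wb4_def, algebra)

lemma wc6_weq_scale: "wc6 (weq_scale u W) = u ^ 6 * wc6 (W :: 'k::field weq)"
  by (induct W rule: prod_induct5) (simp add: weq_scale_def wc6_def wb2_def wb4_def wb6_def, algebra)

lemma wdisc_weq_scale: "wdisc (weq_scale u W) = u ^ 12 * wdisc (W :: 'k::field weq)"
  by (induct W rule: prod_induct5)
    (simp add: weq_scale_def wdisc_def wb2_def wb4_def wb6_def wb8_def, algebra)

lemma weq_iso_invariants:
  fixes W W' :: "'k::field weq"
  assumes "weq_iso W W'"
  obtains u where "u \<noteq> 0" "wc4 W = u ^ 4 * wc4 W'" "wc6 W = u ^ 6 * wc6 W'"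
    "wdisc W = u ^ 12 * wdisc W'"
proof -
  obtain a1 a2 a3 a4 a6 where W: "W = (a1, a2, a3, a4, a6)" by (cases W) auto
  obtain u r s t where u: "u \<noteq> 0" and scaled:
    "weq_scale u W' = (a1 + 2 * s, a2 - s * a1 + 3 * r - s ^ 2, a3 + r * a1 + 2 * t,
       a4 - s * a3 + 2 * r * a2 - (t + r * s) * a1 + 3 * r ^ 2 - 2 * s * t,
       a6 + r * a4 + r ^ 2 * a2 + r ^ 3 - t * a3 - t ^ 2 - r * t * a1)"
    using assms unfolding weq_iso_def weq_scale_def W by auto
  show ?thesis
  proof (rule that[OF u])
    have "wc4 (weq_scale u W') = wc4 W"
      unfolding scaled W wc4_def wb2_def wb4_def by simp algebra
    then show "wc4 W = u ^ 4 * wc4 W'" by (simp add: wc4_weq_scale)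
    have "wc6 (weq_scale u W') = wc6 W"
      unfolding scaled W wc6_def wb2_def wb4_def wb6_def by simp algebra
    then show "wc6 W = u ^ 6 * wc6 W'" by (simp add: wc6_weq_scale)
    have "wdisc (weq_scale u W') = wdisc W"
      unfolding scaled W wdisc_def wb2_def wb4_def wb6_def wb8_def by simp algebra
    then show "wdisc W = u ^ 12 * wdisc W'" by (simp add: wdisc_weq_scale)
  qed
qed

lemma curveE'_eq_curveE: "curveE' a b = curveE (-2 * a) (a ^ 2 - 4 * b)"
  by (simp add: curveE'_def curveE_def)

lemma wdisc_curveE: "wdisc (curveE a b) = 16 * (b ^ 2 * (a ^ 2 - 4 * b))"
  by (simp add: curveE_def wdisc_def wb2_def wb4_def wb6_def wb8_def) algebra

lemma wc4_curveE: "wc4 (curveE a b) = 16 * (a ^ 2 - 3 * b)"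
  by (simp add: curveE_def wc4_def wb2_def wb4_def)

lemma wc6_curveE: "- wc6 (curveE a b) = 32 * a * (2 * a ^ 2 - 9 * b)"
  by (simp add: curveE_def wc6_def wb2_def wb4_def wb6_def) algebra

definition multiplicative_model :: "('k::field \<Rightarrow> int) \<Rightarrow> 'k weq \<Rightarrow> bool" where
  "multiplicative_model v W \<longleftrightarrow> weq_integral v W \<and>
     wa3 W \<in> max_ideal v \<and> wa4 W \<in> max_ideal v \<and> wa6 W \<in> max_ideal v \<and> wb2 W \<in> val_units v"

lemma kodaira_I_iff:
  "kodaira_I v W m \<longleftrightarrow> (\<exists>W0. weq_iso W W0 \<and>
     (m = 0 \<and> weq_integral v W0 \<and> wdisc W0 \<in> val_units v \<or>
      0 < m \<and> multiplicative_model v W0 \<and> wdisc W0 \<noteq> 0 \<and> v (wdisc W0) = int m))"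
  unfolding kodaira_I_def multiplicative_model_def by blast

lemma split_mult_iff:
  "split_mult v W \<longleftrightarrow> (\<exists>W0. weq_iso W W0 \<and> multiplicative_model v W0 \<and>
     (\<exists>T \<in> val_ring v. T ^ 2 + wa1 W0 * T - wa2 W0 \<in> max_ideal v))"
  unfolding split_mult_def multiplicative_model_def by blast

section \<open>Square classes and the image of delta\<close>

lemma sq_class_mult_square:
  fixes c s :: "'k::field"
  assumes s: "s \<noteq> 0"
  shows "sq_class (c * s ^ 2) = sq_class c"
proof (rule set_eqI)
  fix z
  show "z \<in> sq_class (c * s ^ 2) \<longleftrightarrow> z \<in> sq_class c"
  proof
    assume "z \<in> sq_class (c * s ^ 2)"
    then obtain t where "t \<noteq> 0" "z = c * (s * t) ^ 2"
      unfolding sq_class_def by (auto simp: power_mult_distrib)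
    then show "z \<in> sq_class c"
      unfolding sq_class_def using s by auto
  next
    assume "z \<in> sq_class c"
    then obtain t where "t \<noteq> 0" "z = c * s ^ 2 * (t / s) ^ 2"
      unfolding sq_class_def using s by (auto simp: power_divide)
    then show "z \<in> sq_class (c * s ^ 2)"
      unfolding sq_class_def using s by auto
  qed
qed

lemma sq_class_square: "s \<noteq> 0 \<Longrightarrow> sq_class (s ^ 2) = sq_class (1 :: 'k::field)"
  using sq_class_mult_square[of s 1] by simp

lemma sq_class_one_mem_delta_image: "sq_class 1 \<in> delta_image a b"
  unfolding delta_image_def pointsE'_def by (force simp: deltaE'_rep_def)

lemma delta_image_subsetI:
  assumes one: "sq_class 1 \<in> S" and disc: "sq_class (a ^ 2 - 4 * b) \<in> S"
    and points: "\<And>x y. x \<noteq> 0 \<Longrightarrow> y ^ 2 = x * (x ^ 2 - 2 * a * x + (a ^ 2 - 4 * b)) \<Longrightarrow>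
      sq_class x \<in> S"
  shows "delta_image a b \<subseteq> S"
proof
  fix C assume "C \<in> delta_image a b"
  then obtain P where P: "P \<in> pointsE' a b" and C: "C = sq_class (deltaE'_rep a b P)"
    unfolding delta_image_def by blast
  show "C \<in> S"
  proof (cases P)
    case None
    then show ?thesis
      using C one by (simp add: deltaE'_rep_def)
  next
    case (Some xy)
    then obtain x y where xy: "P = Some (x, y)"
      and curve: "y ^ 2 = x * (x ^ 2 - 2 * a * x + (a ^ 2 - 4 * b))"
      using P unfolding pointsE'_def by (auto simp: power2_eq_square power3_eq_cube algebra_simps)
    show ?thesis
    proof (cases "x = 0")
      case True
      then show ?thesis
        using C xy curve disc by (simp add: deltaE'_rep_def)
    next
      case False
      then show ?thesis
        using C xy curve points by (simp add: deltaE'_rep_def)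
    qed
  qed
qed

section \<open>Discrete valuations\<close>

(* discrete_valuation leaves v 0 unconstrained; val_ge gives 0 valuation +infinity. *)
definition val_ge :: "('k::field \<Rightarrow> int) \<Rightarrow> int \<Rightarrow> 'k \<Rightarrow> bool" where
  "val_ge v k x \<longleftrightarrow> x = 0 \<or> k \<le> v x"

lemma val_ring_iff: "x \<in> val_ring v \<longleftrightarrow> val_ge v 0 x"
  by (auto simp: val_ring_def val_ge_def)

lemma max_ideal_iff: "x \<in> max_ideal v \<longleftrightarrow> val_ge v 1 x"
  by (auto simp: max_ideal_def val_ge_def)

locale valued_field =
  fixes v :: "'k::field \<Rightarrow> int"
  assumes discrete_valuation: "discrete_valuation v"
begin

lemma val_mult: "x \<noteq> 0 \<Longrightarrow> y \<noteq> 0 \<Longrightarrow> v (x * y) = v x + v y"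
  using discrete_valuation unfolding discrete_valuation_def by blast

lemma val_add_ge_min: "x \<noteq> 0 \<Longrightarrow> y \<noteq> 0 \<Longrightarrow> x + y \<noteq> 0 \<Longrightarrow> min (v x) (v y) \<le> v (x + y)"
  using discrete_valuation unfolding discrete_valuation_def by blast

lemma val_uniformizer: obtains p where "p \<noteq> 0" "v p = 1"
  using discrete_valuation unfolding discrete_valuation_def by blast

lemma val_one [simp]: "v 1 = 0"
  using val_mult[of 1 1] by simp

lemma val_inverse: "x \<noteq> 0 \<Longrightarrow> v (inverse x) = - v x"
  using val_mult[of x "inverse x"] by simp

lemma val_divide: "x \<noteq> 0 \<Longrightarrow> y \<noteq> 0 \<Longrightarrow> v (x / y) = v x - v y"
  by (simp add: divide_inverse val_mult val_inverse)

lemma val_power: "x \<noteq> 0 \<Longrightarrow> v (x ^ k) = int k * v x"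
  by (induction k) (auto simp: val_mult algebra_simps)

lemma val_mult_unit: "u \<in> val_units v \<Longrightarrow> v (u * x) = v x"
  by (cases "x = 0") (simp_all add: val_units_def val_mult)

lemma val_minus [simp]: "v (- x) = v x"
proof -
  have "v (-1) = 0"
    using val_mult[of "-1" "-1"] by simp
  then show ?thesis
    using val_mult[of "-1" x] by (cases "x = 0") simp_all
qed

lemma val_ge_zero [simp]: "val_ge v k 0"
  by (simp add: val_ge_def)

lemma val_ge_one [simp]: "val_ge v 0 1"
  by (simp add: val_ge_def)

lemma val_ge_self: "val_ge v (v x) x"
  by (simp add: val_ge_def)

lemma val_ge_mult_unit_iff: "u \<in> val_units v \<Longrightarrow> val_ge v k (u * x) \<longleftrightarrow> val_ge v k x"
  by (auto simp: val_ge_def val_mult_unit val_units_def)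

lemma val_ge_mono: "val_ge v k x \<Longrightarrow> l \<le> k \<Longrightarrow> val_ge v l x"
  unfolding val_ge_def by auto

lemma val_ge_minus: "val_ge v k x \<Longrightarrow> val_ge v k (- x)"
  by (simp add: val_ge_def)

lemma val_ge_add: "val_ge v k x \<Longrightarrow> val_ge v k y \<Longrightarrow> val_ge v k (x + y)"
  unfolding val_ge_def using val_add_ge_min[of x y] by force

lemma val_ge_diff: "val_ge v k x \<Longrightarrow> val_ge v k y \<Longrightarrow> val_ge v k (x - y)"
  using val_ge_add[of k x "- y"] by (simp add: val_ge_minus)

lemma val_ge_mult: "val_ge v k x \<Longrightarrow> val_ge v l y \<Longrightarrow> val_ge v (k + l) (x * y)"
  unfolding val_ge_def by (cases "x = 0"; cases "y = 0"; simp add: val_mult)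

lemma val_ge_mult_integral: "val_ge v 0 x \<Longrightarrow> val_ge v k y \<Longrightarrow> val_ge v k (x * y)"
  using val_ge_mult[of 0 x k y] by simp

lemma val_ge_integral_mult: "val_ge v k x \<Longrightarrow> val_ge v 0 y \<Longrightarrow> val_ge v k (x * y)"
  using val_ge_mult[of k x 0 y] by simp

lemma val_ge_one_integral: "val_ge v 1 x \<Longrightarrow> val_ge v 0 x"
  by (erule val_ge_mono) simp

lemma val_ge_of_nat: "val_ge v 0 (of_nat n)"
proof (induction n)
  case (Suc n)
  then show ?case
    using val_ge_add[OF val_ge_one Suc.IH] by simp
qed simp

lemma val_ge_numeral: "val_ge v 0 (numeral w)"
  using val_ge_of_nat[of "numeral w"] by simp

lemma val_ge_power: "val_ge v k x \<Longrightarrow> val_ge v (int n * k) (x ^ n)"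
proof (induction n)
  case (Suc n)
  then show ?case
    using val_ge_mult[of k x "int n * k" "x ^ n"] by (simp add: algebra_simps)
qed (simp add: val_ge_def)

lemma val_ge_divide: "y \<noteq> 0 \<Longrightarrow> val_ge v (k + v y) x \<Longrightarrow> val_ge v k (x / y)"
  unfolding val_ge_def by (cases "x = 0") (auto simp: val_divide)

lemma val_add_dominant:
  assumes x: "x \<noteq> 0" and y: "val_ge v (v x + 1) y"
  shows "x + y \<noteq> 0" and "v (x + y) = v x"
proof -
  have "x + y \<noteq> 0 \<and> v (x + y) = v x"
  proof (cases "y = 0")
    case False
    then have less: "v x < v y"
      using y by (simp add: val_ge_def)
    have sum: "x + y \<noteq> 0"
      using less minus_unique[of x y] by (metis val_minus less_irrefl)
    have "min (v (x + y)) (v (- y)) \<le> v x"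
      using val_add_ge_min[of "x + y" "- y"] sum False x by simp
    then show ?thesis
      using sum less val_add_ge_min[OF x False sum] by simp
  qed (simp add: x)
  then show "x + y \<noteq> 0" "v (x + y) = v x" by simp_all
qed

lemma val_add_eq_min:
  assumes "x \<noteq> 0" "y \<noteq> 0" "v x \<noteq> v y"
  shows "x + y \<noteq> 0" and "v (x + y) = min (v x) (v y)"
proof -
  have "x + y \<noteq> 0 \<and> v (x + y) = min (v x) (v y)"
  proof (cases "v x < v y")
    case True
    then show ?thesis
      using val_add_dominant[of x y] assms by (simp add: val_ge_def)
  next
    case False
    then show ?thesis
      using val_add_dominant[of y x] assms by (simp add: val_ge_def add.commute)
  qed
  then show "x + y \<noteq> 0" "v (x + y) = min (v x) (v y)" by simp_all
qed

lemma val_ge_unbounded: "(\<And>N. val_ge v N x) \<Longrightarrow> x = 0"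
  unfolding val_ge_def by (metis add1_zle_eq less_irrefl)

lemma val_complete_limit:
  assumes complete: "val_complete v"
    and cauchy: "\<And>M m. M \<le> m \<Longrightarrow> val_ge v (int M + 1) (X m - X M)"
  obtains L where "\<And>M. val_ge v (int M + 1) (L - X M)"
proof -
  have "\<exists>M. \<forall>m\<ge>M. \<forall>n\<ge>M. X m - X n = 0 \<or> v (X m - X n) \<ge> N" for N
  proof (intro exI allI impI)
    fix m n assume "nat N \<le> m" "nat N \<le> n"
    then have "val_ge v (int (nat N) + 1) ((X m - X (nat N)) - (X n - X (nat N)))"
      by (intro val_ge_diff cauchy)
    then show "X m - X n = 0 \<or> v (X m - X n) \<ge> N"
      unfolding val_ge_def by (cases "0 \<le> N") auto
  qed
  then obtain L where L: "\<forall>N. \<exists>M. \<forall>n\<ge>M. X n - L = 0 \<or> v (X n - L) \<ge> N"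
    using complete unfolding val_complete_def by blast
  show ?thesis
  proof (rule that)
    fix M
    obtain M' where M': "\<forall>n\<ge>M'. val_ge v (int M + 1) (X n - L)"
      using L unfolding val_ge_def by blast
    define n where "n = max M M'"
    have "M \<le> n" "M' \<le> n"
      by (simp_all add: n_def)
    then have "val_ge v (int M + 1) ((X n - X M) - (X n - L))"
      using M' by (intro val_ge_diff[OF cauchy]) simp_all
    then show "val_ge v (int M + 1) (L - X M)"
      by simp
  qed
qed

lemma weq_integral_coeffs:
  assumes "weq_integral v W"
  shows "val_ge v 0 (wa1 W)" "val_ge v 0 (wa2 W)" "val_ge v 0 (wa3 W)"
    "val_ge v 0 (wa4 W)" "val_ge v 0 (wa6 W)"
  using assms by (simp_all add: weq_integral_def val_ring_iff)

lemma weq_integral_wc4: "weq_integral v W \<Longrightarrow> val_ge v 0 (wc4 W)"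
  unfolding wc4_def wb2_def wb4_def power2_eq_square
  by (intro val_ge_diff val_ge_add val_ge_mult_integral val_ge_numeral)
    (simp_all add: weq_integral_coeffs)

lemma multiplicative_model_coeffs:
  assumes "multiplicative_model v W"
  shows "val_ge v 1 (wa3 W)" "val_ge v 1 (wa4 W)" "val_ge v 1 (wa6 W)"
    "wb2 W \<noteq> 0" "v (wb2 W) = 0"
  using assms by (simp_all add: multiplicative_model_def max_ideal_iff val_units_def)

lemma multiplicative_model_wb4: "multiplicative_model v W \<Longrightarrow> val_ge v 1 (wb4 W)"
  unfolding wb4_def
  by (intro val_ge_add val_ge_mult_integral val_ge_numeral)
    (simp_all add: multiplicative_model_coeffs multiplicative_model_def weq_integral_coeffs)

lemma multiplicative_model_wb6: "multiplicative_model v W \<Longrightarrow> val_ge v 1 (wb6 W)"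
  unfolding wb6_def power2_eq_square
  by (intro val_ge_add val_ge_mult_integral val_ge_numeral)
    (simp_all add: multiplicative_model_coeffs multiplicative_model_def weq_integral_coeffs)

lemma multiplicative_model_wdisc: "multiplicative_model v W \<Longrightarrow> val_ge v 1 (wdisc W)"
  unfolding wdisc_def wb2_def wb4_def wb6_def wb8_def power2_eq_square power3_eq_cube
  by (intro val_ge_add val_ge_diff val_ge_minus val_ge_mult_integral val_ge_numeral)
    (simp_all add: multiplicative_model_coeffs multiplicative_model_def weq_integral_coeffs)

lemma multiplicative_model_wc4:
  assumes "multiplicative_model v W"
  shows "wc4 W \<noteq> 0" and "v (wc4 W) = 0"
proof -
  have b2: "wb2 W ^ 2 \<noteq> 0" "v (wb2 W ^ 2) = 0"
    using multiplicative_model_coeffs[OF assms] val_power[of "wb2 W" 2] by simp_all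
  have "val_ge v (v (wb2 W ^ 2) + 1) (- (24 * wb4 W))"
    using multiplicative_model_wb4[OF assms] b2
    by (simp add: val_ge_minus val_ge_mult_integral val_ge_numeral)
  from val_add_dominant[OF b2(1) this] b2 show "wc4 W \<noteq> 0" "v (wc4 W) = 0"
    by (simp_all add: wc4_def)
qed

lemma kodaira_I_valuations:
  assumes "kodaira_I v W m" and "wdisc W \<noteq> 0"
  obtains e where "v (wdisc W) = int m + 12 * e" and "val_ge v (4 * e) (wc4 W)"
    and "0 < m \<Longrightarrow> wc4 W \<noteq> 0 \<and> v (wc4 W) = 4 * e"
proof -
  obtain W0 where iso: "weq_iso W W0" and W0:
    "m = 0 \<and> weq_integral v W0 \<and> wdisc W0 \<in> val_units v \<or>
     0 < m \<and> multiplicative_model v W0 \<and> wdisc W0 \<noteq> 0 \<and> v (wdisc W0) = int m"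
    using assms(1) unfolding kodaira_I_iff by blast
  obtain u where u: "u \<noteq> 0" and c4: "wc4 W = u ^ 4 * wc4 W0"
    and disc: "wdisc W = u ^ 12 * wdisc W0"
    using weq_iso_invariants[OF iso] by metis
  have "wdisc W0 \<noteq> 0" "v (wdisc W0) = int m"
    using W0 by (auto simp: val_units_def)
  then have "v (wdisc W) = int m + 12 * v u"
    using u disc by (simp add: val_mult val_power)
  moreover have "val_ge v (4 * v u) (wc4 W)"
  proof -
    have "val_ge v 0 (wc4 W0)"
      using W0 by (auto simp: weq_integral_wc4 multiplicative_model_def)
    from val_ge_mult[OF val_ge_self[of "u ^ 4"] this] show ?thesis
      using u c4 by (simp add: val_power)
  qed
  moreover have "wc4 W \<noteq> 0 \<and> v (wc4 W) = 4 * v u" if "0 < m"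
    using W0 that multiplicative_model_wc4 u c4 by (auto simp: val_mult val_power)
  ultimately show ?thesis
    using that by blast
qed

lemma kodaira_I_0_not_split_mult:
  assumes "kodaira_I v W 0" and "split_mult v W" and "wdisc W \<noteq> 0"
  shows False
proof -
  obtain e where disc: "v (wdisc W) = 12 * e" and c4: "val_ge v (4 * e) (wc4 W)"
    using kodaira_I_valuations[OF assms(1,3)] by auto
  obtain W0 where iso: "weq_iso W W0" and W0: "multiplicative_model v W0"
    using assms(2) unfolding split_mult_iff by blast
  obtain u where u: "u \<noteq> 0" and c4': "wc4 W = u ^ 4 * wc4 W0"
    and disc': "wdisc W = u ^ 12 * wdisc W0"
    using weq_iso_invariants[OF iso] by metis
  have "wdisc W0 \<noteq> 0"
    using u disc' assms(3) by auto
  then have "12 * v u < v (wdisc W)"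
    using multiplicative_model_wdisc[OF W0] u disc' by (simp add: val_ge_def val_mult val_power)
  moreover have "wc4 W \<noteq> 0" "v (wc4 W) = 4 * v u"
    using multiplicative_model_wc4[OF W0] u c4' by (simp_all add: val_mult val_power)
  ultimately show False
    using c4 disc by (simp add: val_ge_def)
qed

lemma even_val_iff_of_square_eq_mult:
  assumes "y ^ 2 = x * Q" and "x \<noteq> 0" and "Q \<noteq> 0"
  shows "even (v x) \<longleftrightarrow> even (v Q)"
proof -
  have "y \<noteq> 0"
    using assms by auto
  then have "2 * v y = v x + v Q"
    using assms val_power[of y 2] val_mult[of x Q] by simp
  then show ?thesis
    by presburger
qed

lemma sq_class_even_val:
  assumes c: "c \<noteq> 0" and even: "even (v c)"
  shows "sq_class c \<in> sq_class ` val_units v"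
proof -
  obtain p where p: "p \<noteq> 0" "v p = 1"
    by (rule val_uniformizer)
  obtain k where k: "v c = 2 * k"
    using even by (auto elim: evenE)
  define s where "s = (if 0 \<le> k then p ^ nat k else inverse (p ^ nat (- k)))"
  have s: "s \<noteq> 0" "v s = k"
    using p by (simp_all add: s_def val_power val_inverse)
  have "c / s ^ 2 \<in> val_units v"
    using c s k by (simp add: val_units_def val_divide val_power)
  moreover have "sq_class c = sq_class (c / s ^ 2)"
    using sq_class_mult_square[OF s(1), of "c / s ^ 2"] s by simp
  ultimately show ?thesis
    by blast
qed

lemma cofactor_dominant_terms:
  assumes a: "val_ge v w a" and D: "D \<noteq> 0" "v D = 2 * w" and x: "x \<noteq> 0"
  shows "v x < w \<Longrightarrow> val_ge v (2 * v x + 1) ((x ^ 2 - 2 * a * x + D) - x ^ 2)"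
    and "w < v x \<Longrightarrow> val_ge v (2 * w + 1) ((x ^ 2 - 2 * a * x + D) - D)"
proof -
  have ax: "val_ge v (w + v x) (2 * a * x)"
    using val_ge_mult[OF val_ge_mult_integral[OF val_ge_numeral a] val_ge_self] by simp
  show "val_ge v (2 * v x + 1) ((x ^ 2 - 2 * a * x + D) - x ^ 2)" if "v x < w"
  proof -
    have "val_ge v (2 * v x + 1) (D - 2 * a * x)"
      using that D val_ge_mono[OF ax] by (intro val_ge_diff) (simp_all add: val_ge_def)
    then show ?thesis
      by (simp add: algebra_simps)
  qed
  show "val_ge v (2 * w + 1) ((x ^ 2 - 2 * a * x + D) - D)" if "w < v x"
  proof -
    have "val_ge v (2 * w + 1) (x ^ 2 - 2 * a * x)"
      using that x val_ge_mono[OF ax] by (intro val_ge_diff) (simp_all add: val_ge_def val_power)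
    then show ?thesis
      by simp
  qed
qed

lemma even_val_x_coord:
  assumes curve: "y ^ 2 = x * (x ^ 2 - 2 * a * x + D)" and x: "x \<noteq> 0"
    and a: "val_ge v w a" and D: "D \<noteq> 0" "v D = 2 * w" and w: "even w"
  shows "even (v x)"
proof -
  let ?Q = "x ^ 2 - 2 * a * x + D"
  have x2: "x ^ 2 \<noteq> 0" "v (x ^ 2) = 2 * v x"
    using x by (simp_all add: val_power)
  consider "v x < w" | "w < v x" | "v x = w"
    by linarith
  then show ?thesis
  proof cases
    case 1
    with val_add_dominant[OF x2(1), of "?Q - x ^ 2"] cofactor_dominant_terms(1)[OF a D x]
    have "?Q \<noteq> 0" "v ?Q = 2 * v x"
      using x2 by (simp_all add: algebra_simps)
    then show ?thesis
      using even_val_iff_of_square_eq_mult[OF curve x] by simp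
  next
    case 2
    with val_add_dominant[OF D(1), of "?Q - D"] cofactor_dominant_terms(2)[OF a D x]
    have "?Q \<noteq> 0" "v ?Q = 2 * w"
      using D by (simp_all add: algebra_simps)
    then show ?thesis
      using even_val_iff_of_square_eq_mult[OF curve x] by simp
  next
    case 3
    then show ?thesis
      using w by simp
  qed
qed

lemma delta_image_units:
  assumes D: "a ^ 2 - 4 * b \<noteq> 0" "v (a ^ 2 - 4 * b) = 4 * e" and b: "val_ge v (4 * e) b"
  shows "delta_image a b \<subseteq> sq_class ` val_units v"
proof (rule delta_image_subsetI)
  show "sq_class 1 \<in> sq_class ` val_units v"
    by (simp add: val_units_def)
  show "sq_class (a ^ 2 - 4 * b) \<in> sq_class ` val_units v"
    using D by (intro sq_class_even_val) simp_all
  have "val_ge v (4 * e) ((a ^ 2 - 4 * b) + 4 * b)"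
    using D b by (intro val_ge_add val_ge_mult_integral val_ge_numeral) (simp_all add: val_ge_def)
  then have a: "val_ge v (2 * e) a"
    by (cases "a = 0") (simp_all add: val_ge_def val_power)
  fix x y
  assume "x \<noteq> 0" and "y ^ 2 = x * (x ^ 2 - 2 * a * x + (a ^ 2 - 4 * b))"
  with even_val_x_coord[OF _ _ a D(1)] D(2) show "sq_class x \<in> sq_class ` val_units v"
    by (intro sq_class_even_val) simp_all
qed

end

section \<open>Residue characteristic different from 2\<close>

fun sqrt_newton :: "'k::field \<Rightarrow> nat \<Rightarrow> 'k" where
  "sqrt_newton x 0 = 1"
| "sqrt_newton x (Suc k) = sqrt_newton x k - (sqrt_newton x k ^ 2 - x) / 2"

locale odd_residue_valued_field = valued_field v for v :: "'k::field \<Rightarrow> int" +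
  assumes residue_char_not_2: "residue_char_not_2 v"
begin

lemma two_nonzero [simp]: "(2::'k) \<noteq> 0"
  and val_two [simp]: "v 2 = 0"
  using residue_char_not_2 by (simp_all add: residue_char_not_2_def val_units_def)

lemma two_power_unit: "(2::'k) ^ k \<in> val_units v"
  by (simp add: val_units_def val_power)

lemma val_four_mult: "v (4 * x) = v x"
  and val_sixteen_mult: "v (16 * x) = v x"
  using val_mult_unit[OF two_power_unit[of 2]] val_mult_unit[OF two_power_unit[of 4]]
  by simp_all

lemma sqrt_newton_approx:
  assumes x: "val_ge v 1 (x - 1)"
  shows "val_ge v (int k + 1) (sqrt_newton x k ^ 2 - x) \<and> val_ge v 1 (sqrt_newton x k - 1)"
proof (induction k)
  case 0
  show ?case
    using val_ge_minus[OF x] by simp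
next
  case (Suc k)
  define s where "s = sqrt_newton x k"
  define h where "h = (s ^ 2 - x) / 2"
  have h: "val_ge v (int k + 1) h"
    unfolding h_def using Suc by (intro val_ge_divide) (simp_all add: s_def)
  have s: "val_ge v 1 (1 - s)"
    using val_ge_minus[of 1 "s - 1"] Suc by (simp add: s_def)
  have succ: "sqrt_newton x (Suc k) = s - h"
    by (simp add: s_def h_def)
  have "val_ge v 1 ((s - 1) - h)"
    using Suc val_ge_mono[OF h] by (intro val_ge_diff[of 1 "s - 1"]) (simp_all add: s_def)
  then have close_one: "val_ge v 1 (sqrt_newton x (Suc k) - 1)"
    unfolding succ by (simp add: algebra_simps)
  have "s ^ 2 - x = 2 * h"
    by (simp add: h_def)
  then have "sqrt_newton x (Suc k) ^ 2 - x = 2 * h * (1 - s) + h ^ 2"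
    unfolding succ by algebra
  moreover have "val_ge v (int (Suc k) + 1) (2 * h * (1 - s) + h ^ 2)"
  proof (rule val_ge_add)
    show "val_ge v (int (Suc k) + 1) (2 * h * (1 - s))"
      using val_ge_mult[OF val_ge_mult_integral[OF val_ge_numeral h] s] by simp
    show "val_ge v (int (Suc k) + 1) (h ^ 2)"
      using val_ge_power[OF h, of 2] by (rule val_ge_mono) simp
  qed
  ultimately show ?case
    using close_one by simp
qed

lemma sqrt_newton_cauchy:
  assumes x: "val_ge v 1 (x - 1)" and "M \<le> m"
  shows "val_ge v (int M + 1) (sqrt_newton x m - sqrt_newton x M)"
  using \<open>M \<le> m\<close>
proof (induction m rule: dec_induct)
  case (step m)
  have "val_ge v (int m + 1) ((sqrt_newton x m ^ 2 - x) / 2)"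
    using sqrt_newton_approx[OF x, of m] by (simp add: val_ge_divide)
  then have "val_ge v (int M + 1) (sqrt_newton x (Suc m) - sqrt_newton x m)"
    using step.hyps by (auto intro: val_ge_mono dest: val_ge_minus)
  from val_ge_add[OF this step.IH] show ?case
    by (simp del: sqrt_newton.simps)
qed simp

lemma square_root_near_one:
  assumes complete: "val_complete v" and x: "val_ge v 1 (x - 1)"
  obtains s where "s ^ 2 = x"
proof -
  let ?S = "sqrt_newton x"
  obtain L where L: "\<And>M. val_ge v (int M + 1) (L - ?S M)"
    using val_complete_limit[OF complete sqrt_newton_cauchy[OF x]] by blast
  have close: "val_ge v (int M + 1) (L ^ 2 - x)" for M
  proof -
    have "val_ge v 1 (?S M - 1)"
      using sqrt_newton_approx[OF x, of M] by simp
    from val_ge_add[OF val_ge_one_integral[OF this] val_ge_one]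
    have S: "val_ge v 0 (?S M)"
      by simp
    have "val_ge v 0 (L - ?S M)"
      using L[of M] by (rule val_ge_mono) simp
    from val_ge_add[OF val_ge_add[OF this S] S]
    have "val_ge v 0 (L + ?S M)"
      by (simp add: algebra_simps)
    from val_ge_integral_mult[OF L this]
    have "val_ge v (int M + 1) ((L - ?S M) * (L + ?S M) + (?S M ^ 2 - x))"
      using sqrt_newton_approx[OF x, of M] by (blast intro: val_ge_add)
    also have "(L - ?S M) * (L + ?S M) + (?S M ^ 2 - x) = L ^ 2 - x"
      by (simp add: power2_eq_square algebra_simps)
    finally show ?thesis .
  qed
  have "val_ge v N (L ^ 2 - x)" for N
    using close[of "nat N"] by (rule val_ge_mono) simp
  then have "L ^ 2 - x = 0"
    by (rule val_ge_unbounded)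
  then show ?thesis
    using that by simp
qed

lemma square_root_near_square:
  assumes complete: "val_complete v" and c: "c \<noteq> 0"
    and x: "val_ge v (2 * v c + 1) (x - c ^ 2)"
  obtains s where "s \<noteq> 0" "s ^ 2 = x"
proof -
  have c2: "c ^ 2 \<noteq> 0" "v (c ^ 2) = 2 * v c"
    using c val_power[OF c, of 2] by simp_all
  have "val_ge v 1 ((x - c ^ 2) / c ^ 2)"
    using x c2 by (intro val_ge_divide) (simp_all add: add.commute)
  also have "(x - c ^ 2) / c ^ 2 = x / c ^ 2 - 1"
    using c2 by (simp add: diff_divide_distrib)
  finally obtain s where s: "s ^ 2 = x / c ^ 2"
    using square_root_near_one[OF complete] by blast
  have "x \<noteq> 0"
    using val_add_dominant(1)[OF c2(1), of "x - c ^ 2"] x c2 by simp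
  moreover have "(s * c) ^ 2 = x"
    using s c2(1) by (simp add: power_mult_distrib)
  ultimately show ?thesis
    using that[of "s * c"] by auto
qed

lemma multiplicative_model_wc6_square:
  assumes complete: "val_complete v" and W: "multiplicative_model v W"
    and T: "val_ge v 0 T" "val_ge v 1 (T ^ 2 + wa1 W * T - wa2 W)"
  obtains q where "q \<noteq> 0" "- wc6 W = q ^ 2"
proof -
  define h where "h = T ^ 2 + wa1 W * T - wa2 W"
  define g where "g = 2 * T + wa1 W"
  have g2: "g ^ 2 = wb2 W + 4 * h"
    unfolding g_def h_def wb2_def by algebra
  have b2: "wb2 W \<noteq> 0" "v (wb2 W) = 0"
    using multiplicative_model_coeffs[OF W] by simp_all
  have h: "val_ge v 1 h"
    using T(2) by (simp add: h_def)
  have "val_ge v (v (wb2 W) + 1) (4 * h)"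
    using h b2 by (simp add: val_ge_mult_integral val_ge_numeral)
  from val_add_dominant[OF b2(1) this] have "g ^ 2 \<noteq> 0" "v (g ^ 2) = 0"
    using g2 b2 by simp_all
  then have g: "g ^ 3 \<noteq> 0" "v (g ^ 3) = 0"
    using val_power[of g 2] val_power[of g 3] by auto
  have "(g ^ 3) ^ 2 = (wb2 W + 4 * h) ^ 3"
    unfolding g2 [symmetric] by (simp flip: power_mult)
  then have "- wc6 W - (g ^ 3) ^ 2 =
      - ((3 * (wb2 W * wb2 W) + 12 * wb2 W * h + 16 * (h * h)) * (4 * h))
      - 36 * wb2 W * wb4 W + 216 * wb6 W"
    unfolding wc6_def by algebra
  moreover have "val_ge v 1 \<dots>"
    using val_ge_self[of "wb2 W"] b2 h val_ge_one_integral[OF h] multiplicative_model_wb4[OF W]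
      multiplicative_model_wb6[OF W]
    by (intro val_ge_add val_ge_diff val_ge_minus val_ge_mult_integral val_ge_numeral) simp_all
  ultimately have "val_ge v (2 * v (g ^ 3) + 1) (- wc6 W - (g ^ 3) ^ 2)"
    using g by simp
  then obtain q where "q \<noteq> 0" "q ^ 2 = - wc6 W"
    by (rule square_root_near_square[OF complete g(1)])
  with that show ?thesis
    by simp
qed

lemma split_mult_wc6_square:
  assumes complete: "val_complete v" and "split_mult v W"
  obtains q where "q \<noteq> 0" "- wc6 W = q ^ 2"
proof -
  obtain W0 T where iso: "weq_iso W W0" and W0: "multiplicative_model v W0"
    and T: "val_ge v 0 T" "val_ge v 1 (T ^ 2 + wa1 W0 * T - wa2 W0)"
    using assms(2) unfolding split_mult_iff Bex_def val_ring_iff max_ideal_iff by blast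
  obtain q where q: "q \<noteq> 0" "- wc6 W0 = q ^ 2"
    using multiplicative_model_wc6_square[OF complete W0 T] by blast
  obtain u where u: "u \<noteq> 0" "wc6 W = u ^ 6 * wc6 W0"
    using weq_iso_invariants[OF iso] by metis
  have "- wc6 W = u ^ 6 * (- wc6 W0)"
    using u by simp
  also have "\<dots> = (u ^ 3 * q) ^ 2"
    using q by (simp add: power_mult_distrib flip: power_mult)
  finally have "- wc6 W = (u ^ 3 * q) ^ 2" .
  moreover have "u ^ 3 * q \<noteq> 0"
    using u q by simp
  ultimately show ?thesis
    using that by blast
qed

lemma kodaira_I_curveE_valuations:
  assumes "kodaira_I v (curveE A B) m" and "wdisc (curveE A B) \<noteq> 0"
  obtains e where "2 * v B + v (A ^ 2 - 4 * B) = int m + 12 * e"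
    and "val_ge v (4 * e) (A ^ 2 - 3 * B)"
    and "0 < m \<Longrightarrow> A ^ 2 - 3 * B \<noteq> 0 \<and> v (A ^ 2 - 3 * B) = 4 * e"
proof -
  have B: "B \<noteq> 0" "A ^ 2 - 4 * B \<noteq> 0"
    using assms(2) by (simp_all add: wdisc_curveE)
  have unit: "16 \<in> val_units v"
    using two_power_unit[of 4] by simp
  obtain e where disc: "v (wdisc (curveE A B)) = int m + 12 * e"
    and c4: "val_ge v (4 * e) (wc4 (curveE A B))"
    and c4_mult: "0 < m \<Longrightarrow> wc4 (curveE A B) \<noteq> 0 \<and> v (wc4 (curveE A B)) = 4 * e"
    using kodaira_I_valuations[OF assms] by blast
  show ?thesis
  proof (rule that)
    show "2 * v B + v (A ^ 2 - 4 * B) = int m + 12 * e"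
      using disc B by (simp add: wdisc_curveE val_mult_unit[OF unit] val_mult val_power)
    show "val_ge v (4 * e) (A ^ 2 - 3 * B)"
      using c4 by (simp only: wc4_curveE val_ge_mult_unit_iff[OF unit])
    show "A ^ 2 - 3 * B \<noteq> 0 \<and> v (A ^ 2 - 3 * B) = 4 * e" if "0 < m"
      using c4_mult[OF that] by (simp only: wc4_curveE val_mult_unit[OF unit] mult_eq_0_iff)
        simp
  qed
qed

lemma kodaira_I_curveE'_valuations:
  assumes "kodaira_I v (curveE' a b) m" and "wdisc (curveE' a b) \<noteq> 0"
  obtains e where "2 * v (a ^ 2 - 4 * b) + v b = int m + 12 * e"
    and "val_ge v (4 * e) (a ^ 2 - 4 * b + 16 * b)"
    and "0 < m \<Longrightarrow> a ^ 2 - 4 * b + 16 * b \<noteq> 0 \<and> v (a ^ 2 - 4 * b + 16 * b) = 4 * e"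
proof -
  have "(-2 * a) ^ 2 - 4 * (a ^ 2 - 4 * b) = 16 * b"
    and "(-2 * a) ^ 2 - 3 * (a ^ 2 - 4 * b) = a ^ 2 - 4 * b + 16 * b"
    by (simp_all add: power2_eq_square algebra_simps)
  from kodaira_I_curveE_valuations[of "-2 * a" "a ^ 2 - 4 * b" m, unfolded this] assms that
  show ?thesis
    unfolding curveE'_eq_curveE by (simp only: val_sixteen_mult) blast
qed

lemma kodaira_I_isogenous_valuations:
  assumes kE: "kodaira_I v (curveE a b) (2 * n)" and kE': "kodaira_I v (curveE' a b) n"
    and ellE: "wdisc (curveE a b) \<noteq> 0" and ellE': "wdisc (curveE' a b) \<noteq> 0"
  obtains e where "v (a ^ 2 - 4 * b) = 4 * e" and "v b = int n + 4 * e"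
proof -
  define D where "D = a ^ 2 - 4 * b"
  have b: "b \<noteq> 0" and D: "D \<noteq> 0"
    using ellE by (simp_all add: wdisc_curveE D_def)
  have "a ^ 2 - 3 * b = D + b"
    by (simp add: D_def)
  from kodaira_I_curveE_valuations[OF kE ellE, unfolded this D_def [symmetric]]
  obtain e1 where E1: "2 * v b + v D = int (2 * n) + 12 * e1"
    and G1: "val_ge v (4 * e1) (D + b)" and H1: "0 < n \<Longrightarrow> D + b \<noteq> 0 \<and> v (D + b) = 4 * e1"
    by auto
  from kodaira_I_curveE'_valuations[OF kE' ellE', unfolded D_def [symmetric]]
  obtain e2 where E2: "2 * v D + v b = int n + 12 * e2"
    and G2: "val_ge v (4 * e2) (D + 16 * b)"
    and H2: "0 < n \<Longrightarrow> D + 16 * b \<noteq> 0 \<and> v (D + 16 * b) = 4 * e2"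
    by auto
  have b16: "16 * b \<noteq> 0" "v (16 * b) = v b"
    using b two_power_unit[of 4] by (simp_all add: val_units_def val_sixteen_mult)
  consider "v D < v b" | "v b < v D" | "v D = v b"
    by linarith
  then have "v D = 4 * e1 \<and> v b = int n + 4 * e1"
  proof cases
    case 1
    then have "D + b \<noteq> 0" "v (D + b) = v D"
      using val_add_eq_min[OF D b] by simp_all
    then show ?thesis
      using 1 E1 G1 H1 by (cases "n = 0") (simp_all add: val_ge_def)
  next
    case 2
    then have "D + 16 * b \<noteq> 0" "v (D + 16 * b) = v b" "v (D + b) = v b"
      using val_add_eq_min[OF D b] val_add_eq_min[OF D b16(1)] b16 by simp_all
    then show ?thesis
      using 2 E1 E2 G2 H1 H2 by (cases "n = 0") (simp_all add: val_ge_def)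
  next
    case 3
    have "0 < n \<Longrightarrow> v D \<le> v (D + b)"
      using H1 val_add_ge_min[OF D b] 3 by simp
    then show ?thesis
      using 3 E1 H1 by (cases "n = 0") simp_all
  qed
  then show ?thesis
    using that by (simp add: D_def)
qed

lemma split_mult_curveE_square:
  assumes complete: "val_complete v" and split: "split_mult v (curveE a b)"
    and a: "a \<noteq> 0" and b: "val_ge v (2 * v a + 1) b"
  obtains c where "c ^ 2 = a"
proof -
  obtain q where q: "q \<noteq> 0" "32 * a * (2 * a ^ 2 - 9 * b) = q ^ 2"
    using split_mult_wc6_square[OF complete split] by (metis wc6_curveE)
  define \<rho> where "\<rho> = (2 * a ^ 2 - 9 * b) / (2 * a ^ 2)"
  have a2: "2 * a ^ 2 \<noteq> 0" "v (2 * a ^ 2) = 2 * v a"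
    using a by (simp_all add: val_mult val_power)
  have "val_ge v 1 (- (9 * b) / (2 * a ^ 2))"
    using val_ge_mult_integral[OF val_ge_numeral b] a2
    by (intro val_ge_divide) (simp_all add: val_ge_minus add.commute)
  also have "- (9 * b) / (2 * a ^ 2) = \<rho> - 1 ^ 2"
    using a2 by (simp add: \<rho>_def field_simps)
  finally obtain \<sigma> where \<sigma>: "\<sigma> \<noteq> 0" "\<sigma> ^ 2 = \<rho>"
    using square_root_near_square[OF complete one_neq_zero] by auto
  define r where "r = 8 * a * \<sigma>"
  have "r ^ 2 * a = 32 * a * (2 * a ^ 2 - 9 * b)"
    using \<sigma>(2) a2(1) unfolding r_def by (simp add: \<rho>_def field_simps) algebra
  moreover have "r ^ 2 \<noteq> 0"
    using two_power_unit[of 3] a \<sigma>(1) by (simp add: r_def val_units_def)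
  ultimately have "(q / r) ^ 2 = a"
    using q(2) by (metis nonzero_mult_div_cancel_left power_divide)
  then show ?thesis
    by (rule that)
qed

lemma val_disc_dominant:
  assumes a: "a \<noteq> 0" and b: "b \<noteq> 0" "2 * v a < v b"
  shows "a ^ 2 - 4 * b \<noteq> 0" and "v (a ^ 2 - 4 * b) = 2 * v a"
proof -
  have a2: "a ^ 2 \<noteq> 0" "v (a ^ 2) = 2 * v a"
    using a by (simp_all add: val_power)
  have "val_ge v (v (a ^ 2) + 1) (- (4 * b))"
    using a2 b by (simp add: val_ge_def val_four_mult)
  from val_add_dominant[OF a2(1) this] a2
  show "a ^ 2 - 4 * b \<noteq> 0" "v (a ^ 2 - 4 * b) = 2 * v a"
    by simp_all
qed

lemma sq_class_eq_one_near_square: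
  assumes "val_complete v" and "c \<noteq> 0" and "val_ge v (2 * v c + 1) (x - c ^ 2)"
  shows "sq_class x = sq_class 1"
  using square_root_near_square[OF assms] sq_class_square by metis

lemma sq_class_eq_one_of_cofactor_near_square:
  assumes complete: "val_complete v" and curve: "y ^ 2 = x * Q" and x: "x \<noteq> 0"
    and c: "c \<noteq> 0" "val_ge v (2 * v c + 1) (Q - c ^ 2)"
  shows "sq_class x = sq_class 1"
proof -
  obtain q where q: "q \<noteq> 0" "q ^ 2 = Q"
    using square_root_near_square[OF complete c] by blast
  have Q: "Q \<noteq> 0"
    using q by auto
  have "x = (y / q) ^ 2"
    using curve q Q by (simp add: power_divide eq_divide_eq)
  moreover have "y / q \<noteq> 0"
    using curve q(1) Q x by (metis divide_eq_0_iff mult_eq_0_iff zero_power2)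
  ultimately show ?thesis
    by (metis sq_class_square)
qed

lemma sq_class_x_coord_near_a:
  assumes complete: "val_complete v"
    and curve: "y ^ 2 = x * ((x - a) ^ 2 - 4 * b)" and x: "x \<noteq> 0" and vx: "v x = v a"
    and a: "a \<noteq> 0" "even (v a)" and b: "b \<noteq> 0" "v b = int n + 2 * v a" and n: "0 < n"
    and sq: "(\<exists>c. c ^ 2 = a) \<or> odd n"
  shows "sq_class x = sq_class 1"
proof -
  define z where "z = x - a"
  have b4: "- (4 * b) \<noteq> 0" "v (- (4 * b)) = int n + 2 * v a"
    using two_power_unit[of 2] b by (simp_all add: val_units_def val_four_mult)
  show ?thesis
  proof (cases "z \<noteq> 0 \<and> 2 * v z < int n + 2 * v a")
    case True
    then have "val_ge v (2 * v z + 1) (((x - a) ^ 2 - 4 * b) - z ^ 2)"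
      using b4 by (simp add: z_def val_ge_def)
    then show ?thesis
      using sq_class_eq_one_of_cofactor_near_square[OF complete curve x] True by blast
  next
    case False
    then have z: "z = 0 \<or> int n + 2 * v a \<le> 2 * v z"
      by auto
    from sq show ?thesis
    proof
      assume "\<exists>c. c ^ 2 = a"
      then obtain c where c: "c ^ 2 = a"
        by blast
      then have "c \<noteq> 0" "2 * v c = v a"
        using a(1) val_power[of c 2] by auto
      moreover have "val_ge v (v a + 1) (x - a)"
        using z n by (auto simp: z_def val_ge_def)
      ultimately show ?thesis
        using sq_class_eq_one_near_square[OF complete, of c x] c by auto
    next
      assume "odd n"
      then have "2 * v z \<noteq> int n + 2 * v a"
        by presburger
      then have "val_ge v (v (- (4 * b)) + 1) (z ^ 2)"
        using z b4 by (cases "z = 0") (auto simp: val_ge_def val_power)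
      from val_add_dominant[OF b4(1) this]
      have "(x - a) ^ 2 - 4 * b \<noteq> 0" "v ((x - a) ^ 2 - 4 * b) = int n + 2 * v a"
        using b4 by (simp_all add: z_def)
      with even_val_iff_of_square_eq_mult[OF curve x] vx a(2) \<open>odd n\<close> show ?thesis
        by simp
    qed
  qed
qed

lemma sq_class_x_coord_trivial:
  assumes complete: "val_complete v"
    and curve: "y ^ 2 = x * (x ^ 2 - 2 * a * x + (a ^ 2 - 4 * b))" and x: "x \<noteq> 0"
    and a: "a \<noteq> 0" "even (v a)" and b: "b \<noteq> 0" "v b = int n + 2 * v a" and n: "0 < n"
    and sq: "(\<exists>c. c ^ 2 = a) \<or> odd n"
  shows "sq_class x = sq_class 1"
proof -
  have D: "a ^ 2 - 4 * b \<noteq> 0" "v (a ^ 2 - 4 * b) = 2 * v a"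
    using val_disc_dominant[OF a(1) b(1)] b(2) n by simp_all
  have Da: "val_ge v (2 * v a + 1) ((a ^ 2 - 4 * b) - a ^ 2)"
    using b n by (simp add: val_ge_def val_four_mult)
  consider "v x < v a" | "v a < v x" | "v x = v a"
    by linarith
  then show ?thesis
  proof cases
    case 1
    from cofactor_dominant_terms(1)[OF val_ge_self D x this]
    show ?thesis
      by (rule sq_class_eq_one_of_cofactor_near_square[OF complete curve x x])
  next
    case 2
    let ?Q = "x ^ 2 - 2 * a * x + (a ^ 2 - 4 * b)"
    from val_ge_add[OF cofactor_dominant_terms(2)[OF val_ge_self D x 2] Da]
    have "val_ge v (2 * v a + 1) ((?Q - (a ^ 2 - 4 * b)) + ((a ^ 2 - 4 * b) - a ^ 2))" .
    also have "(?Q - (a ^ 2 - 4 * b)) + ((a ^ 2 - 4 * b) - a ^ 2) = ?Q - a ^ 2"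
      by simp
    finally show ?thesis
      by (rule sq_class_eq_one_of_cofactor_near_square[OF complete curve x a(1)])
  next
    case 3
    have "x ^ 2 - 2 * a * x + (a ^ 2 - 4 * b) = (x - a) ^ 2 - 4 * b"
      by (simp add: power2_eq_square algebra_simps)
    with sq_class_x_coord_near_a[OF complete _ x 3 a b n sq] curve show ?thesis
      by simp
  qed
qed

lemma delta_image_trivial:
  assumes complete: "val_complete v"
    and a: "a \<noteq> 0" "even (v a)" and b: "b \<noteq> 0" "v b = int n + 2 * v a" and n: "0 < n"
    and sq: "(\<exists>c. c ^ 2 = a) \<or> odd n"
  shows "delta_image a b = {sq_class 1}"
proof -
  have "val_ge v (2 * v a + 1) ((a ^ 2 - 4 * b) - a ^ 2)"
    using b n by (simp add: val_ge_def val_four_mult)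
  then have disc: "sq_class (a ^ 2 - 4 * b) = sq_class 1"
    by (rule sq_class_eq_one_near_square[OF complete a(1)])
  have "delta_image a b \<subseteq> {sq_class 1}"
  proof (rule delta_image_subsetI)
    show "sq_class (a ^ 2 - 4 * b) \<in> {sq_class 1}"
      using disc by simp
    fix x y
    assume "x \<noteq> 0" "y ^ 2 = x * (x ^ 2 - 2 * a * x + (a ^ 2 - 4 * b))"
    then show "sq_class x \<in> {sq_class 1}"
      using sq_class_x_coord_trivial[OF complete _ _ a b n sq] by simp
  qed simp
  then show ?thesis
    using sq_class_one_mem_delta_image by blast
qed

lemma delta_image_trivial_multiplicative:
  assumes complete: "val_complete v"
    and D: "a ^ 2 - 4 * b \<noteq> 0" "v (a ^ 2 - 4 * b) = 4 * e"
    and b: "b \<noteq> 0" "v b = int n + 4 * e" and n: "0 < n"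
    and hyp: "split_mult v (curveE a b) \<or> odd n"
  shows "delta_image a b = {sq_class 1}"
proof -
  have "val_ge v (v (a ^ 2 - 4 * b) + 1) (4 * b)"
    using D b n by (simp add: val_ge_def val_four_mult)
  from val_add_dominant[OF D(1) this] D have "a ^ 2 \<noteq> 0" "v (a ^ 2) = 4 * e"
    by simp_all
  then have a: "a \<noteq> 0" "v a = 2 * e"
    using val_power[of a 2] by auto
  have "(\<exists>c. c ^ 2 = a) \<or> odd n"
  proof (cases "odd n")
    case False
    then have "split_mult v (curveE a b)"
      using hyp by simp
    moreover have "val_ge v (2 * v a + 1) b"
      using a b n by (simp add: val_ge_def)
    ultimately show ?thesis
      using split_mult_curveE_square[OF complete _ a(1)] by metis
  qed simp
  with delta_image_trivial[OF complete a(1) _ b(1) _ n] a b(2) show ?thesis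
    by simp
qed

end

theorem lemma3p3:
  fixes v :: "'k::field \<Rightarrow> int" and a b :: 'k and n :: nat
  assumes dv: "discrete_valuation v"
    and cpl: "val_complete v"
    and ch: "residue_char_not_2 v"
    and ellE: "wdisc (curveE a b) \<noteq> 0"
    and ellE': "wdisc (curveE' a b) \<noteq> 0"
    and kE: "kodaira_I v (curveE a b) (2 * n)"
    and kE': "kodaira_I v (curveE' a b) n"
  shows "(split_mult v (curveE a b) \<or> odd n \<longrightarrow> delta_image a b = {sq_class 1})
       \<and> (n = 0 \<longrightarrow> delta_image a b \<subseteq> sq_class ` val_units v)"
proof -
  interpret odd_residue_valued_field v
    using dv ch by (intro_locales; simp add: valued_field_def odd_residue_valued_field_axioms_def)
  have b: "b \<noteq> 0" and D: "a ^ 2 - 4 * b \<noteq> 0"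
    using ellE by (simp_all add: wdisc_curveE)
  obtain e where vD: "v (a ^ 2 - 4 * b) = 4 * e" and vb: "v b = int n + 4 * e"
    using kodaira_I_isogenous_valuations[OF kE kE' ellE ellE'] by blast
  have "delta_image a b = {sq_class 1}" if hyp: "split_mult v (curveE a b) \<or> odd n"
  proof -
    have "0 < n"
      using hyp kodaira_I_0_not_split_mult[OF _ _ ellE] kE by (cases n) auto
    with delta_image_trivial_multiplicative[OF cpl D vD b vb _ hyp] show ?thesis
      by simp
  qed
  moreover have "delta_image a b \<subseteq> sq_class ` val_units v" if "n = 0"
    using delta_image_units[OF D vD] vb that by (simp add: val_ge_def)
  ultimately show ?thesis
    by blast
qed

end
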